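(* Let $\mathcal A$ be a $\mathbb Z_2$-graded algebra with a graded differential calculus $(\Omega^\bullet,d)$, $\Omega^0=\mathcal A$, $d^2=0$, satisfying the graded Leibniz rule. Let $\pi:\Omega^1\otimes_{\mathcal A}\Omega^1\to\Omega^2$, $\pi(\xi\otimes\eta)=\xi\wedge\eta$, and $\pi_{12}=\pi\otimes1$. Let $\sigma:\Omega^1\otimes_{\mathcal A}\Omega^1\to\Omega^1\otimes_{\mathcal A}\Omega^1$ be a left $\mathcal A$-linear map with $\pi\circ(\sigma-1)=0$, and let $\sigma_{12}=\sigma\otimes1\otimes\cdots\otimes1$. Let $D$ be a covariant derivative, i.e. linear maps $D:\otimes^n\Omega^1\to\otimes^{n+1}\Omega^1$ (tensor products over $\mathcal A$), satisfying for homogeneous $f\in\mathcal A$, $\xi\in\Omega^1$, $\omega\in\Omega^1$, $\omega'\in\otimes^{n-1}\Omega^1$ and $\Omega\in\otimes^n\Omega^1$: $$D(f\Omega)=df\otimes\Omega+(-1)^{\hat f}fD\Omega,\quad D(\xi f)=(-1)^{\hat\xi}\sigma(\xi\otimes df)+(D\xi)f,\quad D(\omega\otimes\omega')=D\omega\otimes\omega'+(-1)^{\hat\omega}\sigma_{12}(\omega\otimes D\omega').$$ Suppose $D$ is torsionless, i.e. $\Theta:=d-\pi\circ D$ vanishes on $\Omega^1$. Then the curvature $\pi_{12}D^2:\Omega^1\to\Omega^2\otimes_{\mathcal A}\Omega^1$ is left $\mathcal A$-linear: $\pi_{12}D^2(f\xi)=f\,\pi_{12}D^2(\xi)$ for all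 $f\in\mathcal A$, $\xi\in\Omega^1$.
   Context: $\hat f$ denotes the parity of a homogeneous element; the parity of $d f$ is $\hat f+1$ mod 2, and $D$ changes parity by one. *)

theory Defs
  imports Main
begin

text \<open>Parities are booleans: False = even, True = odd.
  psign p x is (-1)^p x.\<close>

definition psign :: "bool \<Rightarrow> 'm::ab_group_add \<Rightarrow> 'm" where
  "psign p x = (if p then - x else x)"

definition addhom :: "('m::ab_group_add \<Rightarrow> 'n::ab_group_add) \<Rightarrow> bool" where
  "addhom f \<longleftrightarrow> (\<forall>x y. f (x + y) = f x + f y)"

definition add_subgroup :: "'m::ab_group_add set \<Rightarrow> bool" where
  "add_subgroup S \<longleftrightarrow> 0 \<in> S \<and> (\<forall>x\<in>S. \<forall>y\<in>S. x + y \<in> S) \<and> (\<forall>x\<in>S. - x \<in> S)"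

definition Z2_decomp :: "(bool \<Rightarrow> 'm::ab_group_add set) \<Rightarrow> bool" where
  "Z2_decomp G \<longleftrightarrow> (\<forall>p. add_subgroup (G p)) \<and> G False \<inter> G True = {0} \<and>
     (\<forall>x. \<exists>x0\<in>G False. \<exists>x1\<in>G True. x = x0 + x1)"

definition Z2_graded_algebra :: "(bool \<Rightarrow> 'a::ring_1 set) \<Rightarrow> bool" where
  "Z2_graded_algebra G \<longleftrightarrow> Z2_decomp G \<and> 1 \<in> G False \<and>
     (\<forall>p q. \<forall>x\<in>G p. \<forall>y\<in>G q. x * y \<in> G (p \<noteq> q))"

definition left_module :: "('a::ring_1 \<Rightarrow> 'm::ab_group_add \<Rightarrow> 'm) \<Rightarrow> bool" where
  "left_module l \<longleftrightarrow> (\<forall>a x y. l a (x + y) = l a x + l a y) \<and> (\<forall>a b x. l (a + b) x = l a x + l b x)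
     \<and> (\<forall>a b x. l (a * b) x = l a (l b x)) \<and> (\<forall>x. l 1 x = x)"

definition right_module :: "('m::ab_group_add \<Rightarrow> 'a::ring_1 \<Rightarrow> 'm) \<Rightarrow> bool" where
  "right_module r \<longleftrightarrow> (\<forall>a x y. r (x + y) a = r x a + r y a) \<and> (\<forall>a b x. r x (a + b) = r x a + r x b)
     \<and> (\<forall>a b x. r x (a * b) = r (r x a) b) \<and> (\<forall>x. r x 1 = x)"

definition bimodule :: "('a::ring_1 \<Rightarrow> 'm::ab_group_add \<Rightarrow> 'm) \<Rightarrow> ('m \<Rightarrow> 'a \<Rightarrow> 'm) \<Rightarrow> bool" where
  "bimodule l r \<longleftrightarrow> left_module l \<and> right_module r \<and> (\<forall>a x b. r (l a x) b = l a (r x b))"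

definition graded_bimodule :: "(bool \<Rightarrow> 'a::ring_1 set) \<Rightarrow> ('a \<Rightarrow> 'm::ab_group_add \<Rightarrow> 'm)
    \<Rightarrow> ('m \<Rightarrow> 'a \<Rightarrow> 'm) \<Rightarrow> (bool \<Rightarrow> 'm set) \<Rightarrow> bool" where
  "graded_bimodule GA l r G \<longleftrightarrow> bimodule l r \<and> Z2_decomp G \<and>
     (\<forall>p q. \<forall>a\<in>GA p. \<forall>x\<in>G q. l a x \<in> G (p \<noteq> q) \<and> r x a \<in> G (p \<noteq> q))"

text \<open>Graded differential calculus, truncated at degree 2:
  Omega^0 = A, Omega^1, Omega^2, d : A -> Omega^1, d : Omega^1 -> Omega^2,
  product wedge : Omega^1 x Omega^1 -> Omega^2; the products of A with
  Omega^1, Omega^2 are the bimodule actions.\<close>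
definition graded_diff_calculus ::
  "(bool \<Rightarrow> 'a::ring_1 set) \<Rightarrow>
   ('a \<Rightarrow> 'o1::ab_group_add \<Rightarrow> 'o1) \<Rightarrow> ('o1 \<Rightarrow> 'a \<Rightarrow> 'o1) \<Rightarrow> (bool \<Rightarrow> 'o1 set) \<Rightarrow>
   ('a \<Rightarrow> 'o2::ab_group_add \<Rightarrow> 'o2) \<Rightarrow> ('o2 \<Rightarrow> 'a \<Rightarrow> 'o2) \<Rightarrow> (bool \<Rightarrow> 'o2 set) \<Rightarrow>
   ('a \<Rightarrow> 'o1) \<Rightarrow> ('o1 \<Rightarrow> 'o2) \<Rightarrow> ('o1 \<Rightarrow> 'o1 \<Rightarrow> 'o2) \<Rightarrow> bool" where
  "graded_diff_calculus GA l1 r1 G1 l2 r2 G2 d0 d1 wedge \<longleftrightarrow>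
     Z2_graded_algebra GA \<and> graded_bimodule GA l1 r1 G1 \<and> graded_bimodule GA l2 r2 G2 \<and>
     \<comment> \<open>wedge product: biadditive, associative with the module actions, parity additive\<close>
     (\<forall>x x' y. wedge (x + x') y = wedge x y + wedge x' y) \<and>
     (\<forall>x y y'. wedge x (y + y') = wedge x y + wedge x y') \<and>
     (\<forall>a x y. wedge (l1 a x) y = l2 a (wedge x y)) \<and>
     (\<forall>a x y. wedge (r1 x a) y = wedge x (l1 a y)) \<and>
     (\<forall>a x y. wedge x (r1 y a) = r2 (wedge x y) a) \<and>
     (\<forall>p q. \<forall>x\<in>G1 p. \<forall>y\<in>G1 q. wedge x y \<in> G2 (p \<noteq> q)) \<and>
     \<comment> \<open>differential: additive, changes parity, squares to zero, graded Leibniz\<close>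
     addhom d0 \<and> addhom d1 \<and>
     (\<forall>p. \<forall>f\<in>GA p. d0 f \<in> G1 (\<not> p)) \<and> (\<forall>p. \<forall>x\<in>G1 p. d1 x \<in> G2 (\<not> p)) \<and>
     (\<forall>f. d1 (d0 f) = 0) \<and>
     (\<forall>p. \<forall>f\<in>GA p. \<forall>g. d0 (f * g) = r1 (d0 f) g + psign p (l1 f (d0 g))) \<and>
     (\<forall>p. \<forall>f\<in>GA p. \<forall>x. d1 (l1 f x) = wedge (d0 f) x + psign p (l2 f (d1 x))) \<and>
     (\<forall>p. \<forall>x\<in>G1 p. \<forall>f. d1 (r1 x f) = r2 (d1 x) f + psign p (wedge x (d0 f)))"

text \<open>Tensor product over A of a right A-module (M, r) and a left A-module (N, l),
  characterised as the quotient of the free abelian group on M x N by the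
  biadditivity and balancing relations: t is biadditive and balanced, its image
  generates, and a formal integer combination maps to 0 iff it lies in the
  relation subgroup.\<close>

definition zsc :: "int \<Rightarrow> 'm::ab_group_add \<Rightarrow> 'm" where
  "zsc k x = (if k \<ge> 0 then (\<Sum>i<nat k. x) else - (\<Sum>i<nat (- k). x))"

definition delta :: "'p \<Rightarrow> 'p \<Rightarrow> int" where
  "delta q = (\<lambda>p. if p = q then 1 else 0)"

inductive tensor_rel :: "('m::ab_group_add \<Rightarrow> 'a::ring_1 \<Rightarrow> 'm) \<Rightarrow> ('a \<Rightarrow> 'n::ab_group_add \<Rightarrow> 'n)
    \<Rightarrow> ('m \<times> 'n \<Rightarrow> int) \<Rightarrow> bool" for r l where
  zero: "tensor_rel r l (\<lambda>_. 0)"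
| add: "tensor_rel r l c \<Longrightarrow> tensor_rel r l c' \<Longrightarrow> tensor_rel r l (\<lambda>p. c p + c' p)"
| neg: "tensor_rel r l c \<Longrightarrow> tensor_rel r l (\<lambda>p. - c p)"
| lin1: "tensor_rel r l (\<lambda>p. delta (x + x', y) p - delta (x, y) p - delta (x', y) p)"
| lin2: "tensor_rel r l (\<lambda>p. delta (x, y + y') p - delta (x, y) p - delta (x, y') p)"
| bal: "tensor_rel r l (\<lambda>p. delta (r x a, y) p - delta (x, l a y) p)"

definition tensor_product :: "('m::ab_group_add \<Rightarrow> 'a::ring_1 \<Rightarrow> 'm) \<Rightarrow> ('a \<Rightarrow> 'n::ab_group_add \<Rightarrow> 'n)
    \<Rightarrow> ('m \<Rightarrow> 'n \<Rightarrow> 't::ab_group_add) \<Rightarrow> bool" where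
  "tensor_product r l t \<longleftrightarrow>
     (\<forall>x x' y. t (x + x') y = t x y + t x' y) \<and>
     (\<forall>x y y'. t x (y + y') = t x y + t x y') \<and>
     (\<forall>x a y. t (r x a) y = t x (l a y)) \<and>
     (\<forall>z. \<exists>xs. z = sum_list (map (\<lambda>(x, y). t x y) xs)) \<and>
     (\<forall>c. finite {p. c p \<noteq> 0} \<longrightarrow>
        (\<Sum>p | c p \<noteq> 0. zsc (c p) (t (fst p) (snd p))) = 0 \<longrightarrow> tensor_rel r l c)"

definition tensor_grading :: "('m \<Rightarrow> 'n \<Rightarrow> 't::ab_group_add) \<Rightarrow> (bool \<Rightarrow> 'm set) \<Rightarrow> (bool \<Rightarrow> 'n set)
    \<Rightarrow> bool \<Rightarrow> 't set" where
  "tensor_grading t G H p = {z. \<exists>xs. z = sum_list (map (\<lambda>(x, y). t x y) xs) \<and>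
      (\<forall>(x, y)\<in>set xs. \<exists>q s. x \<in> G q \<and> y \<in> H s \<and> (q \<noteq> s) = p)}"

end

theory Submission
  imports Defs
begin

text \<open>For homogeneous f of parity p the Leibniz rules give
  D^2(f\<xi>) = D(df \<otimes> \<xi>) + (-1)^p (df \<otimes> D\<xi> + (-1)^p f D^2\<xi>), and
  D(df \<otimes> \<xi>) = D(df) \<otimes> \<xi> + (-1)^(p+1) \<sigma>12(df \<otimes> D\<xi>).
  After applying \<pi>12 the term \<pi>(D(df)) \<otimes> \<xi> vanishes, because torsion-freeness
  gives \<pi>(D(df)) = d(df) = 0, and since \<pi> \<sigma> = \<pi> the two terms in df \<otimes> D\<xi> appear
  with the opposite signs (-1)^(p+1) and (-1)^p and cancel. What remains is f \<pi>12 D^2\<xi>;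
  the general case follows by splitting f into its even and odd parts.\<close>

lemma addhom_0: "addhom f \<Longrightarrow> f 0 = 0"
  unfolding addhom_def by (metis add_cancel_left_right)

lemma addhom_uminus:
  assumes "addhom f"
  shows "f (- x) = - f x"
proof -
  have "f (- x) + f x = f (- x + x)" using assms unfolding addhom_def by metis
  also have "\<dots> = 0" using addhom_0[OF assms] by simp
  finally show ?thesis by (simp add: eq_neg_iff_add_eq_0)
qed

lemma addhom_psign: "addhom f \<Longrightarrow> f (psign p x) = psign p (f x)"
  unfolding psign_def by (simp add: addhom_uminus)

lemma addhom_eq_on_tensor_product:
  assumes "tensor_product r l t" and "addhom F" and "addhom G"
    and "\<And>x y. F (t x y) = G (t x y)"
  shows "F z = G z"
proof -
  have "F (sum_list (map (\<lambda>(x, y). t x y) xs)) = G (sum_list (map (\<lambda>(x, y). t x y) xs))" for xs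
    using assms(2-4) by (induction xs) (auto simp: addhom_def addhom_0)
  moreover obtain xs where "z = sum_list (map (\<lambda>(x, y). t x y) xs)"
    using assms(1) unfolding tensor_product_def by blast
  ultimately show ?thesis by simp
qed

lemma tensor_product_zero_left:
  assumes "tensor_product r l t"
  shows "t 0 y = 0"
  using assms unfolding tensor_product_def by (metis add_cancel_right_right)

lemma tensor_map_left_linear:
  assumes "tensor_product r l t" and "left_module lT" and "left_module lV" and "addhom F"
    and "\<And>a x y. lT a (t x y) = t (lM a x) y"
    and "\<And>a x y. F (t (lM a x) y) = lV a (F (t x y))"
  shows "F (lT a z) = lV a (F z)"
proof (rule addhom_eq_on_tensor_product[OF assms(1)])
  show "addhom (\<lambda>z. F (lT a z))" and "addhom (\<lambda>z. lV a (F z))"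
    using assms(2-4) unfolding addhom_def left_module_def by simp_all
qed (simp add: assms(5,6))

lemma tensor_map_comp_eq:
  assumes "tensor_product r l t" and "addhom P" and "addhom S"
    and "\<And>z y. P (t z y) = h (p z) y" and "\<And>z y. S (t z y) = t (s z) y"
    and "\<And>z. p (s z) = p z"
  shows "P (S w) = P w"
proof (rule addhom_eq_on_tensor_product[OF assms(1)])
  show "addhom (\<lambda>w. P (S w))" using assms(2,3) unfolding addhom_def by simp
qed (simp_all add: assms(2,4-6))

lemma Z2_decomp_addhom_eqI:
  assumes "Z2_decomp G" and "addhom F" and "addhom H"
    and "\<And>p x. x \<in> G p \<Longrightarrow> F x = H x"
  shows "F x = H x"
proof -
  obtain x0 x1 where "x0 \<in> G False" "x1 \<in> G True" "x = x0 + x1"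
    using assms(1) unfolding Z2_decomp_def by blast
  then show ?thesis using assms(2-4) unfolding addhom_def by simp
qed

lemma curvature_left_linear_homogeneous:
  assumes D2_add: "addhom D2" and pi12_add: "addhom pi12"
    and f: "f \<in> GA p" and df: "d0 f \<in> G1 (\<not> p)"
    and D1_left: "\<forall>p. \<forall>f\<in>GA p. \<forall>x. D1 (l1 f x) = tt (d0 f) x + psign p (lT2 f (D1 x))"
    and D2_left: "\<forall>p. \<forall>f\<in>GA p. \<forall>z. D2 (lT2 f z) = t1r (d0 f) z + psign p (lT3 f (D2 z))"
    and D2_tensor: "\<forall>q. \<forall>x\<in>G1 q. \<forall>x'.
                     D2 (tt x x') = t12 (D1 x) x' + psign q (sigma12 (t1r x (D1 x')))"
    and exact: "\<And>x. pi12 (t12 (D1 (d0 f)) x) = 0"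
    and pi12_sigma12: "\<And>w. pi12 (sigma12 w) = pi12 w"
    and pi12_left: "\<And>w. pi12 (lT3 f w) = lW f (pi12 w)"
  shows "pi12 (D2 (D1 (l1 f x))) = lW f (pi12 (D2 (D1 x)))"
proof -
  have D2_plus: "D2 (u + v) = D2 u + D2 v" and pi12_plus: "pi12 (w + w') = pi12 w + pi12 w'"
    for u v w w' using D2_add pi12_add unfolding addhom_def by blast+
  have D1_fx: "D1 (l1 f x) = tt (d0 f) x + psign p (lT2 f (D1 x))"
    and D2_fz: "D2 (lT2 f (D1 x)) = t1r (d0 f) (D1 x) + psign p (lT3 f (D2 (D1 x)))"
    and D2_dfx: "D2 (tt (d0 f) x) = t12 (D1 (d0 f)) x + psign (\<not> p) (sigma12 (t1r (d0 f) (D1 x)))"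
    using D1_left D2_left D2_tensor f df by blast+
  define u where "u = pi12 (t1r (d0 f) (D1 x))"
  have "pi12 (D2 (D1 (l1 f x))) = pi12 (D2 (tt (d0 f) x)) + psign p (pi12 (D2 (lT2 f (D1 x))))"
    unfolding D1_fx D2_plus pi12_plus addhom_psign[OF D2_add] addhom_psign[OF pi12_add] ..
  also have "\<dots> = psign (\<not> p) u + psign p (u + psign p (pi12 (lT3 f (D2 (D1 x)))))"
    unfolding D2_dfx D2_fz pi12_plus addhom_psign[OF pi12_add] exact pi12_sigma12 u_def
    by simp
  also have "\<dots> = pi12 (lT3 f (D2 (D1 x)))"
    unfolding psign_def by (cases p) auto
  finally show ?thesis unfolding pi12_left .
qed

theorem mainTheorem2:
  fixes GA :: "bool \<Rightarrow> 'a::ring_1 set"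
    and l1 :: "'a \<Rightarrow> 'o1::ab_group_add \<Rightarrow> 'o1" and r1 :: "'o1 \<Rightarrow> 'a \<Rightarrow> 'o1"
    and G1 :: "bool \<Rightarrow> 'o1 set"
    and l2 :: "'a \<Rightarrow> 'o2::ab_group_add \<Rightarrow> 'o2" and r2 :: "'o2 \<Rightarrow> 'a \<Rightarrow> 'o2"
    and G2 :: "bool \<Rightarrow> 'o2 set"
    and d0 :: "'a \<Rightarrow> 'o1" and d1 :: "'o1 \<Rightarrow> 'o2" and wedge :: "'o1 \<Rightarrow> 'o1 \<Rightarrow> 'o2"
    and tt :: "'o1 \<Rightarrow> 'o1 \<Rightarrow> 't2::ab_group_add"
    and lT2 :: "'a \<Rightarrow> 't2 \<Rightarrow> 't2" and rT2 :: "'t2 \<Rightarrow> 'a \<Rightarrow> 't2"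
    and t12 :: "'t2 \<Rightarrow> 'o1 \<Rightarrow> 't3::ab_group_add" and t1r :: "'o1 \<Rightarrow> 't2 \<Rightarrow> 't3"
    and lT3 :: "'a \<Rightarrow> 't3 \<Rightarrow> 't3"
    and tw :: "'o2 \<Rightarrow> 'o1 \<Rightarrow> 'w::ab_group_add" and lW :: "'a \<Rightarrow> 'w \<Rightarrow> 'w"
    and pi :: "'t2 \<Rightarrow> 'o2" and pi12 :: "'t3 \<Rightarrow> 'w"
    and sigma :: "'t2 \<Rightarrow> 't2" and sigma12 :: "'t3 \<Rightarrow> 't3"
    and D1 :: "'o1 \<Rightarrow> 't2" and D2 :: "'t2 \<Rightarrow> 't3"
  assumes calc: "graded_diff_calculus GA l1 r1 G1 l2 r2 G2 d0 d1 wedge"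
    \<comment> \<open>Omega^1 (x)_A Omega^1 with its bimodule structure\<close>
    and T2: "tensor_product r1 l1 tt"
    and T2_bimod: "bimodule lT2 rT2"
    and T2_l: "\<forall>a x y. lT2 a (tt x y) = tt (l1 a x) y"
    and T2_r: "\<forall>a x y. rT2 (tt x y) a = tt x (r1 y a)"
    \<comment> \<open>(x)^3 Omega^1, as (Omega^1 (x) Omega^1) (x) Omega^1 = Omega^1 (x) (Omega^1 (x) Omega^1)\<close>
    and T3: "tensor_product rT2 l1 t12"
    and T3': "tensor_product r1 lT2 t1r"
    and T3_assoc: "\<forall>x y z. t1r x (tt y z) = t12 (tt x y) z"
    and T3_lmod: "left_module lT3"
    and T3_l: "\<forall>a z y. lT3 a (t12 z y) = t12 (lT2 a z) y"
    \<comment> \<open>Omega^2 (x)_A Omega^1 with its left module structure\<close>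
    and W: "tensor_product r2 l1 tw"
    and W_lmod: "left_module lW"
    and W_l: "\<forall>a w y. lW a (tw w y) = tw (l2 a w) y"
    \<comment> \<open>pi and pi12 = pi (x) 1\<close>
    and pi_add: "addhom pi" and pi_def: "\<forall>x y. pi (tt x y) = wedge x y"
    and pi12_add: "addhom pi12" and pi12_def: "\<forall>z y. pi12 (t12 z y) = tw (pi z) y"
    \<comment> \<open>sigma: left A-linear, pi o (sigma - 1) = 0; sigma12 = sigma (x) 1\<close>
    and sigma_add: "addhom sigma" and sigma_left: "\<forall>a z. sigma (lT2 a z) = lT2 a (sigma z)"
    and pi_sigma: "\<forall>z. pi (sigma z) = pi z"
    and sigma12_add: "addhom sigma12"
    and sigma12_def: "\<forall>z y. sigma12 (t12 z y) = t12 (sigma z) y"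
    \<comment> \<open>covariant derivative D on Omega^1 and on (x)^2 Omega^1\<close>
    and D1_add: "addhom D1" and D2_add: "addhom D2"
    and D1_par: "\<forall>p. \<forall>x\<in>G1 p. D1 x \<in> tensor_grading tt G1 G1 (\<not> p)"
    and D2_par: "\<forall>p. \<forall>z\<in>tensor_grading tt G1 G1 p.
                   D2 z \<in> tensor_grading t12 (tensor_grading tt G1 G1) G1 (\<not> p)"
    and D1_left: "\<forall>p. \<forall>f\<in>GA p. \<forall>x. D1 (l1 f x) = tt (d0 f) x + psign p (lT2 f (D1 x))"
    and D2_left: "\<forall>p. \<forall>f\<in>GA p. \<forall>z. D2 (lT2 f z) = t1r (d0 f) z + psign p (lT3 f (D2 z))"
    and D1_right: "\<forall>p q. \<forall>f\<in>GA p. \<forall>x\<in>G1 q.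
                     D1 (r1 x f) = psign q (sigma (tt x (d0 f))) + rT2 (D1 x) f"
    and D2_tensor: "\<forall>q. \<forall>x\<in>G1 q. \<forall>x'.
                     D2 (tt x x') = t12 (D1 x) x' + psign q (sigma12 (t1r x (D1 x')))"
    \<comment> \<open>torsion Theta = d - pi o D vanishes on Omega^1\<close>
    and torsionless: "\<forall>x. d1 x - pi (D1 x) = 0"
  shows "\<forall>f x. pi12 (D2 (D1 (l1 f x))) = lW f (pi12 (D2 (D1 x)))"
proof -
  have GA: "Z2_decomp GA" and l1_lmod: "left_module l1" and l2_lmod: "left_module l2"
    and wedge_left: "\<forall>a x y. wedge (l1 a x) y = l2 a (wedge x y)"
    and d0_par: "\<forall>p. \<forall>f\<in>GA p. d0 f \<in> G1 (\<not> p)" and dd: "\<forall>f. d1 (d0 f) = 0"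
    using calc unfolding graded_diff_calculus_def Z2_graded_algebra_def graded_bimodule_def
      bimodule_def by auto
  have pi_left: "pi (lT2 a z) = l2 a (pi z)" for a z
    using tensor_map_left_linear[OF T2 _ l2_lmod pi_add] T2_bimod T2_l pi_def wedge_left
    unfolding bimodule_def by simp
  have pi12_left: "pi12 (lT3 a w) = lW a (pi12 w)" for a w
    using tensor_map_left_linear[OF T3 T3_lmod W_lmod pi12_add] T3_l pi12_def pi_left W_l by simp
  have pi12_sigma12: "pi12 (sigma12 w) = pi12 w" for w
    using tensor_map_comp_eq[OF T3 pi12_add sigma12_add, of tw pi sigma] pi12_def sigma12_def pi_sigma
    by simp
  have exact: "pi12 (t12 (D1 (d0 f)) x) = 0" for f x
  proof -
    have "pi (D1 (d0 f)) = d1 (d0 f)" using torsionless by simp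
    then show ?thesis using dd pi12_def tensor_product_zero_left[OF W] by simp
  qed
  show ?thesis
  proof (intro allI)
    fix f x
    show "pi12 (D2 (D1 (l1 f x))) = lW f (pi12 (D2 (D1 x)))"
    proof (rule Z2_decomp_addhom_eqI[OF GA, where F="\<lambda>f. pi12 (D2 (D1 (l1 f x)))"])
      show "addhom (\<lambda>f. pi12 (D2 (D1 (l1 f x))))" and "addhom (\<lambda>f. lW f (pi12 (D2 (D1 x))))"
        using l1_lmod W_lmod D1_add D2_add pi12_add unfolding left_module_def addhom_def by simp_all
      show "pi12 (D2 (D1 (l1 g x))) = lW g (pi12 (D2 (D1 x)))" if g: "g \<in> GA p" for g p
        by (rule curvature_left_linear_homogeneous[OF D2_add pi12_add g _ D1_left D2_left D2_tensor])
          (use d0_par g exact pi12_sigma12 pi12_left in blast)+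
    qed
  qed
qed

end
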